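(* Let $a\in\mathbb{R}$ and $\lambda\in[0,1)$, and let $f_{a,\lambda}=h+\overline{g}$ be the generalized harmonic quasiconformal Koebe function, i.e. $h,g$ are analytic in the unit disk $\mathbb{D}$ with $h(0)=g(0)=0$ and $$h(z)-g(z)=k_a(z),\qquad \frac{g'(z)}{h'(z)}=\lambda z\quad(z\in\mathbb{D}).$$ Then $f_{a,\lambda}$ is univalent in $\mathbb{D}$ if and only if $-2\le a\le 2$.
   Context: $\mathbb{D}=\{z\in\mathbb{C}:|z|<1\}$. For $a\in\mathbb{R}\setminus\{0\}$ the generalized Koebe function is $k_a(z)=\frac{1}{2a}\left[\left(\frac{1+z}{1-z}\right)^a-1\right]$ (principal branch; $\frac{1+z}{1-z}$ lies in the right half-plane), and $k_0(z)=\frac12\log\frac{1+z}{1-z}$ (the limit $a\to0$). The system determines $h,g$ uniquely, and $h'(0)=1$, $g'(0)=0$. *)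

theory Defs
  imports "HOL-Complex_Analysis.Complex_Analysis"
begin

text \<open>Generalized Koebe function k_a (principal branch; complex powr is exp (w * Ln z)).\<close>
definition gen_koebe :: "real \<Rightarrow> complex \<Rightarrow> complex" where
  "gen_koebe a z =
     (if a = 0 then Ln ((1 + z) / (1 - z)) / 2
      else (((1 + z) / (1 - z)) powr (complex_of_real a) - 1) / (2 * complex_of_real a))"

end

theory Submission
  imports Defs
begin

text \<open>
  Shear construction of Clunie and Sheil-Small: because \<open>|g'| < |h'|\<close>, the map \<open>f = h + cnj g\<close>
  is univalent as soon as \<open>k = h - g\<close> is univalent and the image \<open>k(disc)\<close> is convex in the horizontal
  direction. Indeed, pulling the horizontal segment from \<open>k z\<^sub>1\<close> to \<open>k z\<^sub>2\<close> back by
  \<open>k\<^sup>-\<^sup>1\<close>, the derivative of \<open>Re (h + g)\<close> is \<open>d \<cdot> Re ((h' + g') / (h' - g'))\<close> with \<open>d\<close> real and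
  nonzero, so \<open>Re (h + g)\<close> cannot take the same value at both ends.

  With the Cayley map \<open>C z = (1 + z) / (1 - z)\<close> from the disc onto the right half-plane,
  \<open>k\<^sub>a = E\<^sub>a \<circ> Ln \<circ> C\<close> where \<open>Ln \<circ> C\<close> maps the disc onto the strip \<open>|Im s| < \<pi>/2\<close> and
  \<open>E\<^sub>a s = (exp (a s) - 1) / (2a)\<close>. Hence \<open>k\<^sub>a(disc)\<close> is a real affine image of the sector
  \<open>|Arg u| < |a|\<pi>/2\<close>, which for \<open>|a| \<le> 2\<close> is horizontally convex, and \<open>k\<^sub>a\<close> is injective.
  For \<open>|a| > 2\<close>, uniqueness of the solution forces \<open>h\<close> and \<open>g\<close> to commute with conjugation,
  and the non-real point with \<open>Ln (C z) = i\<pi>/a\<close> has \<open>k\<^sub>a z = -1/a\<close> real; then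
  \<open>f (cnj z) = f z\<close>.
\<close>

lemma Re_add_div_diff_pos:
  fixes a b :: complex
  assumes "cmod b < cmod a"
  shows "0 < Re ((a + b) / (a - b))"
proof -
  have "a \<noteq> b" using assms by auto
  then have "0 < (cmod (a - b))\<^sup>2" by simp
  moreover have "Re ((a + b) / (a - b)) = ((cmod a)\<^sup>2 - (cmod b)\<^sup>2) / (cmod (a - b))\<^sup>2"
    by (simp add: Re_divide cmod_power2) (simp add: power2_eq_square algebra_simps)
  moreover have "(cmod b)\<^sup>2 < (cmod a)\<^sup>2"
    using assms by (simp add: power_strict_mono)
  ultimately show ?thesis by simp
qed

definition horizontally_convex :: "complex set \<Rightarrow> bool" where
  "horizontally_convex S \<longleftrightarrow> (\<forall>p\<in>S. \<forall>q\<in>S. Im p = Im q \<longrightarrow> closed_segment p q \<subseteq> S)"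

lemma horizontally_convexD:
  assumes "horizontally_convex S" "p \<in> S" "q \<in> S" "Im p = Im q" "0 \<le> t" "t \<le> 1"
  shows "p + complex_of_real t * (q - p) \<in> S"
proof -
  have "p + complex_of_real t * (q - p) \<in> closed_segment p q"
    using assms(5,6) unfolding in_segment
    by (intro exI[of _ t]) (auto simp: scaleR_conv_of_real algebra_simps)
  then show ?thesis using assms(1-4) by (auto simp: horizontally_convex_def)
qed

lemma convex_imp_horizontally_convex: "convex S \<Longrightarrow> horizontally_convex S"
  by (simp add: horizontally_convex_def closed_segment_subset)

lemma horizontally_convex_real_affine_image:
  assumes "horizontally_convex S" and "c \<noteq> 0"
  shows "horizontally_convex ((\<lambda>u. (u - complex_of_real b) / complex_of_real c) ` S)"
  unfolding horizontally_convex_def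
proof (intro ballI impI subsetI)
  let ?f = "\<lambda>u. (u - complex_of_real b) / complex_of_real c"
  fix p q x assume "p \<in> ?f ` S" "q \<in> ?f ` S" and Im_eq: "Im p = Im q"
    and "x \<in> closed_segment p q"
  then obtain u1 u2 t where u: "u1 \<in> S" "u2 \<in> S" "p = ?f u1" "q = ?f u2"
    and t: "0 \<le> t" "t \<le> 1" "x = (1 - t) *\<^sub>R p + t *\<^sub>R q"
    by (auto simp: in_segment)
  have "Im u1 = Im u2" using Im_eq u assms(2) by simp
  then have "(1 - t) *\<^sub>R u1 + t *\<^sub>R u2 \<in> S"
    using assms(1) u t by (force simp: horizontally_convex_def in_segment)
  moreover have "x = ?f ((1 - t) *\<^sub>R u1 + t *\<^sub>R u2)"
    using assms(2) by (simp add: t u scaleR_conv_of_real field_simps)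
  ultimately show "x \<in> ?f ` S" by blast
qed

lemma harmonic_shear_inverse:
  fixes h g :: "complex \<Rightarrow> complex"
  assumes S: "open S" and hol: "h holomorphic_on S" "g holomorphic_on S"
    and dil: "\<forall>z\<in>S. cmod (deriv g z) < cmod (deriv h z)"
    and inj: "inj_on (\<lambda>z. h z - g z) S"
  obtains \<phi> F' where "\<And>z. z \<in> S \<Longrightarrow> \<phi> (h z - g z) = z"
    and "\<And>q. q \<in> (\<lambda>z. h z - g z) ` S \<Longrightarrow>
           ((\<lambda>q. h (\<phi> q) + g (\<phi> q)) has_field_derivative F' q) (at q)"
    and "\<And>q. q \<in> (\<lambda>z. h z - g z) ` S \<Longrightarrow> 0 < Re (F' q)"
proof -
  define k where "k z = h z - g z" for z
  have k_hol: "k holomorphic_on S" unfolding k_def[abs_def] using hol by (intro holomorphic_intros)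
  obtain \<phi> where \<phi>_hol: "\<phi> holomorphic_on k ` S"
    and \<phi>_deriv: "\<And>z. z \<in> S \<Longrightarrow> deriv k z * deriv \<phi> (k z) = 1"
    and \<phi>_k: "\<And>z. z \<in> S \<Longrightarrow> \<phi> (k z) = z"
    using holomorphic_has_inverse[OF k_hol S] inj by (auto simp: k_def[abs_def])
  have kS: "open (k ` S)" using open_mapping_thm3[OF k_hol S] inj by (simp add: k_def[abs_def])
  have hd: "(h has_field_derivative deriv h z) (at z)" "(g has_field_derivative deriv g z) (at z)"
    if "z \<in> S" for z
    using holomorphic_derivI[OF hol(1) S that] holomorphic_derivI[OF hol(2) S that] by auto
  define F' where "F' q = (deriv h (\<phi> q) + deriv g (\<phi> q)) / (deriv h (\<phi> q) - deriv g (\<phi> q))" for q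
  have "((\<lambda>q. h (\<phi> q) + g (\<phi> q)) has_field_derivative F' q) (at q)" if q: "q \<in> k ` S" for q
  proof -
    obtain z where z: "z \<in> S" "q = k z" using q by blast
    have "deriv k z = deriv h z - deriv g z"
      unfolding k_def[abs_def] using hd[OF z(1)] by (intro DERIV_imp_deriv derivative_intros)
    moreover have "deriv k z * deriv \<phi> q = 1" using \<phi>_deriv z by simp
    ultimately have \<phi>': "deriv \<phi> q = 1 / (deriv h z - deriv g z)"
      by (auto simp: eq_divide_eq mult.commute)
    have \<phi>_has_deriv: "(\<phi> has_field_derivative deriv \<phi> q) (at q)"
      using holomorphic_derivI[OF \<phi>_hol kS q] .
    have "\<phi> q = z" using \<phi>_k z by simp
    then have "((\<lambda>q. h (\<phi> q) + g (\<phi> q)) has_field_derivative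
        deriv h z * deriv \<phi> q + deriv g z * deriv \<phi> q) (at q)"
      using hd z(1) by (intro DERIV_add DERIV_chain2[OF _ \<phi>_has_deriv]) auto
    then show ?thesis using \<phi>' \<open>\<phi> q = z\<close> by (simp add: F'_def add_divide_distrib)
  qed
  moreover have "0 < Re (F' q)" if "q \<in> k ` S" for q
    using that dil \<phi>_k by (auto simp: F'_def intro!: Re_add_div_diff_pos)
  ultimately show ?thesis using that[of \<phi> F'] \<phi>_k by (simp add: k_def[abs_def])
qed

lemma inj_on_harmonic_shear:
  fixes h g :: "complex \<Rightarrow> complex"
  assumes S: "open S" and hol: "h holomorphic_on S" "g holomorphic_on S"
    and dil: "\<forall>z\<in>S. cmod (deriv g z) < cmod (deriv h z)"
    and inj: "inj_on (\<lambda>z. h z - g z) S"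
    and conv: "horizontally_convex ((\<lambda>z. h z - g z) ` S)"
  shows "inj_on (\<lambda>z. h z + cnj (g z)) S"
proof (rule inj_onI, rule ccontr)
  define k where "k z = h z - g z" for z
  obtain \<phi> F' where \<phi>_k: "\<And>z. z \<in> S \<Longrightarrow> \<phi> (k z) = z"
    and F_deriv: "\<And>q. q \<in> k ` S \<Longrightarrow> ((\<lambda>q. h (\<phi> q) + g (\<phi> q)) has_field_derivative F' q) (at q)"
    and Re_F'_pos: "\<And>q. q \<in> k ` S \<Longrightarrow> 0 < Re (F' q)"
    using harmonic_shear_inverse[OF S hol dil inj] unfolding k_def[abs_def] by blast
  fix z1 z2 assume z: "z1 \<in> S" "z2 \<in> S" and f_eq: "h z1 + cnj (g z1) = h z2 + cnj (g z2)"
    and "z1 \<noteq> z2"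
  define d where "d = k z2 - k z1"
  have "d \<noteq> 0" using inj z \<open>z1 \<noteq> z2\<close> by (auto simp: d_def k_def inj_on_def)
  have "Im d = 0" using arg_cong[OF f_eq, of Im] by (simp add: d_def k_def)
  have seg: "k z1 + complex_of_real t * d \<in> k ` S" if "t \<in> {0..1}" for t
    using horizontally_convexD[OF conv, of "k z1" "k z2" t] z that \<open>Im d = 0\<close>
    by (auto simp: d_def k_def)
  define R where "R t = Re (h (\<phi> (k z1 + complex_of_real t * d)) + g (\<phi> (k z1 + complex_of_real t * d)))" for t
  have R_deriv: "(R has_real_derivative Re d * Re (F' (k z1 + complex_of_real t * d))) (at t)"
    if "t \<in> {0..1}" for t
  proof -
    have "((\<lambda>t. k z1 + complex_of_real t * d) has_vector_derivative d) (at t)"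
      by (auto intro!: derivative_eq_intros simp: has_vector_derivative_def scaleR_conv_of_real)
    from field_vector_diff_chain_at[OF this F_deriv[OF seg[OF that]]]
    have "((\<lambda>t. h (\<phi> (k z1 + complex_of_real t * d)) + g (\<phi> (k z1 + complex_of_real t * d)))
        has_vector_derivative d * F' (k z1 + complex_of_real t * d)) (at t)" by (simp add: o_def)
    from has_field_derivative_Re[OF this] show ?thesis
      using \<open>Im d = 0\<close> by (simp add: R_def[abs_def])
  qed
  have "R 0 = R 1"
    using arg_cong[OF f_eq, of Re] \<phi>_k z by (simp add: R_def d_def)
  moreover have "continuous_on {0..1} R"
    using R_deriv by (meson DERIV_isCont continuous_at_imp_continuous_on)
  moreover have "R differentiable (at t)" if "0 < t" "t < 1" for t
    using R_deriv[of t] that by (auto simp: real_differentiable_def)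
  ultimately obtain c where c: "0 < c" "c < 1" "(R has_real_derivative 0) (at c)"
    using Rolle[of 0 1 R] by auto
  moreover from c have "c \<in> {0..1}" by simp
  ultimately have "Re d * Re (F' (k z1 + complex_of_real c * d)) = 0"
    using DERIV_unique[OF R_deriv] by blast
  then show False
    using \<open>d \<noteq> 0\<close> \<open>Im d = 0\<close> Re_F'_pos[OF seg[OF \<open>c \<in> {0..1}\<close>]] by (simp add: complex_eq_iff)
qed

lemma harmonic_shear_unique:
  fixes h1 g1 h2 g2 \<omega> :: "complex \<Rightarrow> complex"
  assumes S: "open S" "connected S"
    and hol: "h1 holomorphic_on S" "g1 holomorphic_on S" "h2 holomorphic_on S" "g2 holomorphic_on S"
    and diff_eq: "\<forall>z\<in>S. h1 z - g1 z = h2 z - g2 z"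
    and dil: "\<forall>z\<in>S. deriv g1 z = \<omega> z * deriv h1 z" "\<forall>z\<in>S. deriv g2 z = \<omega> z * deriv h2 z"
    and \<omega>: "\<forall>z\<in>S. \<omega> z \<noteq> 1"
    and z0: "z0 \<in> S" "h1 z0 = h2 z0"
    and z: "z \<in> S"
  shows "h1 z = h2 z"
proof -
  define D where "D z = h1 z - h2 z" for z
  have D_deriv: "(D has_field_derivative 0) (at x)" if x: "x \<in> S" for x
  proof -
    note hd = holomorphic_derivI[OF _ S(1) x]
    have "(D has_field_derivative deriv h1 x - deriv h2 x) (at x)"
      unfolding D_def[abs_def] using hol by (intro derivative_intros hd)
    moreover have "(D has_field_derivative deriv g1 x - deriv g2 x) (at x)"
    proof (rule has_field_derivative_transform_within_open[OF _ S(1) x])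
      show "((\<lambda>z. g1 z - g2 z) has_field_derivative deriv g1 x - deriv g2 x) (at x)"
        using hol by (intro derivative_intros hd)
      show "\<And>z. z \<in> S \<Longrightarrow> g1 z - g2 z = D z"
        using diff_eq by (auto simp: D_def algebra_simps)
    qed
    ultimately have "deriv h1 x - deriv h2 x = deriv g1 x - deriv g2 x"
      using DERIV_unique by blast
    also have "\<dots> = \<omega> x * (deriv h1 x - deriv h2 x)"
      using dil x by (simp add: algebra_simps)
    finally have "(deriv h1 x - deriv h2 x) * (1 - \<omega> x) = 0" by (simp add: algebra_simps)
    then have "deriv h1 x - deriv h2 x = 0" using \<omega> x by simp
    then show ?thesis using \<open>(D has_field_derivative deriv h1 x - deriv h2 x) (at x)\<close> by simp
  qed
  have "continuous_on S D"
    using D_deriv by (meson DERIV_isCont continuous_at_imp_continuous_on)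
  then obtain c where "\<And>x. x \<in> S \<Longrightarrow> D x = c"
    using DERIV_zero_connected_constant[OF S(2,1) finite.emptyI] D_deriv by blast
  then have "D z = D z0" using z z0(1) by metis
  then show ?thesis using z0(2) by (simp add: D_def)
qed

lemma norm_of_real_mult_less_1:
  "\<bar>r\<bar> \<le> 1 \<Longrightarrow> cmod z < 1 \<Longrightarrow> cmod (complex_of_real r * z) < 1"
  by (auto simp: norm_mult intro: le_less_trans[OF mult_left_le_one_le])

lemma harmonic_shear_cnj_symmetric:
  fixes h g k :: "complex \<Rightarrow> complex" and lambda :: real
  assumes hol: "h holomorphic_on ball 0 1" "g holomorphic_on ball 0 1"
    and "h 0 \<in> \<real>"
    and hk: "\<forall>z\<in>ball 0 1. h z - g z = k z"
    and k_cnj: "\<forall>z\<in>ball 0 1. k (cnj z) = cnj (k z)"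
    and dil: "\<forall>z\<in>ball 0 1. deriv g z = complex_of_real lambda * z * deriv h z"
    and "\<bar>lambda\<bar> \<le> 1"
    and z: "z \<in> ball 0 1"
  shows "h (cnj z) = cnj (h z)" "g (cnj z) = cnj (g z)"
proof -
  \<comment> \<open>the reflected pair \<open>(H, G)\<close> solves the same system, so it coincides with \<open>(h, g)\<close>\<close>
  define H where "H = cnj \<circ> h \<circ> cnj"
  define G where "G = cnj \<circ> g \<circ> cnj"
  have H_deriv: "(H has_field_derivative cnj (deriv h (cnj x))) (at x)"
    and G_deriv: "(G has_field_derivative cnj (deriv g (cnj x))) (at x)" if "x \<in> ball 0 1" for x
    unfolding H_def G_def using that
    by (auto intro!: has_field_derivative_cnj_cnj holomorphic_derivI[OF hol(1)] holomorphic_derivI[OF hol(2)])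
  have "H holomorphic_on ball 0 1" "G holomorphic_on ball 0 1"
    unfolding holomorphic_on_open[OF open_ball] using H_deriv G_deriv by blast+
  moreover have "\<forall>x\<in>ball 0 1. H x - G x = h x - g x"
    using hk k_cnj by (auto simp: H_def G_def simp flip: complex_cnj_diff)
  moreover have "\<forall>x\<in>ball 0 1. deriv G x = complex_of_real lambda * x * deriv H x"
  proof
    fix x :: complex assume x: "x \<in> ball 0 1"
    then have "deriv G x = cnj (complex_of_real lambda * cnj x * deriv h (cnj x))"
      using DERIV_imp_deriv[OF G_deriv[OF x]] dil by simp
    also have "\<dots> = complex_of_real lambda * x * deriv H x"
      using DERIV_imp_deriv[OF H_deriv[OF x]] by simp
    finally show "deriv G x = complex_of_real lambda * x * deriv H x" .
  qed
  moreover have "\<forall>x\<in>ball 0 1. complex_of_real lambda * x \<noteq> 1"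
    using norm_of_real_mult_less_1[OF \<open>\<bar>lambda\<bar> \<le> 1\<close>] by fastforce
  moreover have "H 0 = h 0" using \<open>h 0 \<in> \<real>\<close> by (simp add: H_def Reals_cnj_iff)
  ultimately have "H z = h z"
    using harmonic_shear_unique[OF open_ball connected_ball _ _ hol, of H G "\<lambda>x. complex_of_real lambda * x" 0 z]
      dil z by auto
  then show h_cnj: "h (cnj z) = cnj (h z)" by (simp add: H_def complex_eq_iff)
  have "cnj z \<in> ball 0 1" using z by simp
  then have "g (cnj z) = h (cnj z) - k (cnj z)" using hk by (auto simp: algebra_simps)
  also have "\<dots> = cnj (g z)"
    using h_cnj k_cnj z bspec[OF hk z, symmetric] by (auto simp flip: complex_cnj_diff)
  finally show "g (cnj z) = cnj (g z)" .
qed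

definition cayley :: "complex \<Rightarrow> complex" where
  "cayley z = (1 + z) / (1 - z)"

definition inv_cayley :: "complex \<Rightarrow> complex" where
  "inv_cayley w = (w - 1) / (w + 1)"

lemma Re_cayley_pos: "cmod z < 1 \<Longrightarrow> 0 < Re (cayley z)"
  using Re_add_div_diff_pos[of z 1] by (simp add: cayley_def)

lemma inv_cayley_cayley: "z \<noteq> 1 \<Longrightarrow> inv_cayley (cayley z) = z"
  by (simp add: cayley_def inv_cayley_def field_simps)

lemma cayley_inv_cayley: "w \<noteq> -1 \<Longrightarrow> cayley (inv_cayley w) = w"
  by (simp add: cayley_def inv_cayley_def field_simps add_eq_0_iff)

lemma norm_inv_cayley_less_1: "0 < Re w \<Longrightarrow> cmod (inv_cayley w) < 1"
proof -
  assume "0 < Re w"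
  then have "cmod (w - 1) < cmod (w + 1)"
    by (simp add: cmod_def power2_eq_square algebra_simps)
  moreover have "w + 1 \<noteq> 0" using \<open>0 < Re w\<close> by (auto simp: complex_eq_iff)
  ultimately show ?thesis by (simp add: inv_cayley_def norm_divide divide_less_eq)
qed

definition strip :: "complex set" where
  "strip = {s. \<bar>Im s\<bar> < pi / 2}"

lemma convex_strip: "convex strip"
proof -
  have "strip = {s. Im s < pi / 2} \<inter> {s. Im s > - (pi / 2)}"
    by (auto simp: strip_def)
  then show ?thesis
    by (metis convex_Int convex_halfspace_Im_lt convex_halfspace_Im_gt)
qed

lemma Ln_cayley_image: "(\<lambda>z. Ln (cayley z)) ` ball 0 1 = strip"
proof (intro equalityI subsetI)
  fix s assume "s \<in> (\<lambda>z. Ln (cayley z)) ` ball 0 1"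
  then show "s \<in> strip"
    using Re_Ln_pos_lt_imp Re_cayley_pos by (auto simp: strip_def)
next
  fix s assume s: "s \<in> strip"
  have "0 < cos (Im s)"
    using s by (intro cos_gt_zero_pi) (auto simp: strip_def)
  then have "0 < Re (exp s)" by (simp add: Re_exp)
  moreover have "exp s \<noteq> -1"
    using \<open>0 < Re (exp s)\<close> by auto
  moreover have "Ln (exp s) = s"
    using s pi_gt_zero by (intro Ln_exp) (auto simp: strip_def)
  ultimately show "s \<in> (\<lambda>z. Ln (cayley z)) ` ball 0 1"
    by (intro image_eqI[of _ _ "inv_cayley (exp s)"])
       (auto simp: cayley_inv_cayley norm_inv_cayley_less_1)
qed

lemma inj_on_Ln_cayley: "inj_on (\<lambda>z. Ln (cayley z)) (ball 0 1)"
proof (rule inj_onI)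
  fix z1 z2 :: complex
  assume z: "z1 \<in> ball 0 1" "z2 \<in> ball 0 1" and "Ln (cayley z1) = Ln (cayley z2)"
  then have "exp (Ln (cayley z1)) = exp (Ln (cayley z2))" by simp
  moreover have "cayley z1 \<noteq> 0" "cayley z2 \<noteq> 0"
    using z Re_cayley_pos by force+
  ultimately have "cayley z1 = cayley z2" by simp
  then show "z1 = z2"
    using z inv_cayley_cayley by (metis mem_ball_0 norm_one order.irrefl)
qed

text \<open>Since \<open>Arg 0 = 0\<close>, the apex has to be excluded explicitly.\<close>

definition sector :: "real \<Rightarrow> complex set" where
  "sector \<theta> = {u. u \<noteq> 0 \<and> \<bar>Arg u\<bar> < \<theta>}"

lemma cnj_in_sector_iff [simp]: "cnj u \<in> sector \<theta> \<longleftrightarrow> u \<in> sector \<theta>"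
  by (simp add: sector_def Arg_cnj)

lemma Arg_less_iff_in_upper_half_plane:
  assumes "0 < Im u" and "0 < \<theta>" "\<theta> \<le> pi"
  shows "Arg u < \<theta> \<longleftrightarrow> Im u * cos \<theta> < Re u * sin \<theta>"
proof -
  have "u \<noteq> 0" using assms(1) by auto
  then have "Im u * cos \<theta> - Re u * sin \<theta> = cmod u * sin (Arg u - \<theta>)"
    by (simp add: sin_diff cos_Arg sin_Arg algebra_simps)
  moreover have "0 < cmod u" using \<open>u \<noteq> 0\<close> by simp
  moreover have "0 < Arg u" "Arg u < pi"
    using assms(1) Arg_lt_pi by auto
  moreover have "sin (Arg u - \<theta>) < 0 \<longleftrightarrow> Arg u < \<theta>"
  proof
    assume "Arg u < \<theta>"
    then have "0 < sin (\<theta> - Arg u)"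
      using assms \<open>0 < Arg u\<close> by (intro sin_gt_zero) auto
    then show "sin (Arg u - \<theta>) < 0"
      by (metis minus_diff_eq neg_less_0_iff_less sin_minus)
  next
    assume neg: "sin (Arg u - \<theta>) < 0"
    show "Arg u < \<theta>"
    proof (rule ccontr)
      assume "\<not> Arg u < \<theta>"
      then have "0 \<le> sin (Arg u - \<theta>)"
        using assms \<open>Arg u < pi\<close> by (intro sin_ge_zero) auto
      then show False using neg by simp
    qed
  qed
  ultimately have "Im u * cos \<theta> - Re u * sin \<theta> < 0 \<longleftrightarrow> Arg u < \<theta>"
    by (simp add: mult_less_0_iff)
  then show ?thesis by simp
qed

lemma sector_segment_upper:
  assumes "0 < \<theta>" "\<theta> \<le> pi" and "0 < Im p" "Im p = Im q"
    and "p \<in> sector \<theta>" "q \<in> sector \<theta>" and "x \<in> closed_segment p q"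
  shows "x \<in> sector \<theta>"
proof -
  obtain t where t: "0 \<le> t" "t \<le> 1" "x = (1 - t) *\<^sub>R p + t *\<^sub>R q"
    using assms(7) by (auto simp: in_segment)
  have Im_x: "Im x = Im p" unfolding t(3) using assms(4) by (simp add: algebra_simps)
  have pos: "0 < Arg p" "0 < Arg q" "0 < Arg x"
    using assms(3,4) Im_x Arg_lt_pi[of p] Arg_lt_pi[of q] Arg_lt_pi[of x] by auto
  have "Im p * cos \<theta> - Re p * sin \<theta> < 0" "Im q * cos \<theta> - Re q * sin \<theta> < 0"
    using assms pos by (auto simp: sector_def Arg_less_iff_in_upper_half_plane)
  then have "(1 - t) * (Im p * cos \<theta> - Re p * sin \<theta>) + t * (Im q * cos \<theta> - Re q * sin \<theta>) < 0"
    using t by (intro convex_bound_lt) auto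
  also have "(1 - t) * (Im p * cos \<theta> - Re p * sin \<theta>) + t * (Im q * cos \<theta> - Re q * sin \<theta>)
      = Im x * cos \<theta> - Re x * sin \<theta>"
    unfolding t(3) using assms(4) by (simp add: algebra_simps)
  finally have "Im x * cos \<theta> < Re x * sin \<theta>" by simp
  then have "Arg x < \<theta>"
    using assms(1,2,3) Im_x by (simp add: Arg_less_iff_in_upper_half_plane)
  moreover have "x \<noteq> 0" using Im_x assms(3) by auto
  ultimately show ?thesis using pos by (simp add: sector_def)
qed

lemma horizontally_convex_sector:
  assumes "0 < \<theta>" "\<theta> \<le> pi"
  shows "horizontally_convex (sector \<theta>)"
  unfolding horizontally_convex_def
proof (intro ballI impI subsetI)
  fix p q x assume p: "p \<in> sector \<theta>" and q: "q \<in> sector \<theta>" and Im_eq: "Im p = Im q"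
    and x: "x \<in> closed_segment p q"
  consider "0 < Im p" | "Im p < 0" | "Im p = 0" by linarith
  then show "x \<in> sector \<theta>"
  proof cases
    case 1
    then show ?thesis using sector_segment_upper assms p q Im_eq x by blast
  next
    case 2
    have "cnj x \<in> closed_segment (cnj p) (cnj q)"
      using x by (auto simp: in_segment)
    then have "cnj x \<in> sector \<theta>"
      using sector_segment_upper[OF assms, of "cnj p" "cnj q" "cnj x"] 2 p q Im_eq by simp
    then show ?thesis by simp
  next
    case 3
    have "0 < Re u" if "u \<in> sector \<theta>" "Im u = 0" for u
    proof -
      have "u \<in> \<real>" using that(2) by (simp add: complex_is_Real_iff)
      then have "0 \<le> Re u" using that(1) assms by (auto simp: sector_def Arg_real split: if_splits)
      moreover have "u \<noteq> 0" using that(1) by (simp add: sector_def)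
      ultimately show ?thesis using that(2) by (auto simp: complex_eq_iff)
    qed
    then have pos: "0 < Re p" "0 < Re q" using p q 3 Im_eq by auto
    obtain t where t: "0 \<le> t" "t \<le> 1" "x = (1 - t) *\<^sub>R p + t *\<^sub>R q"
      using x by (auto simp: in_segment)
    have "(1 - t) * (- Re p) + t * (- Re q) < 0"
      using pos t by (intro convex_bound_lt) auto
    then have "0 < Re x" by (simp add: t(3) algebra_simps)
    moreover have "x \<in> \<real>" using 3 Im_eq by (simp add: t(3) complex_is_Real_iff)
    ultimately show ?thesis using assms by (auto simp: sector_def Arg_real)
  qed
qed

lemma exp_image_strip:
  assumes "a \<noteq> 0" "\<bar>a\<bar> \<le> 2"
  shows "(\<lambda>s. exp (complex_of_real a * s)) ` strip = sector (\<bar>a\<bar> * pi / 2)"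
proof (intro equalityI subsetI)
  fix u assume "u \<in> (\<lambda>s. exp (complex_of_real a * s)) ` strip"
  then obtain s where s: "s \<in> strip" and u: "u = exp (complex_of_real a * s)" by blast
  have "\<bar>a * Im s\<bar> < \<bar>a\<bar> * pi / 2"
    using s assms(1) by (simp add: strip_def abs_mult)
  moreover have "\<bar>a\<bar> * pi / 2 \<le> pi" using assms(2) by simp
  ultimately have "-pi < a * Im s" "a * Im s \<le> pi" by linarith+
  then have "Arg u = a * Im s" using Arg_exp[of "complex_of_real a * s"] by (simp add: u)
  then show "u \<in> sector (\<bar>a\<bar> * pi / 2)"
    using \<open>\<bar>a * Im s\<bar> < \<bar>a\<bar> * pi / 2\<close> by (simp add: sector_def u)
next
  fix u assume u: "u \<in> sector (\<bar>a\<bar> * pi / 2)"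
  define s where "s = Ln u / complex_of_real a"
  have "Im s = Arg u / a"
    using u by (simp add: s_def sector_def Arg_eq_Im_Ln)
  then have "s \<in> strip"
    using u assms(1) by (simp add: strip_def sector_def abs_div divide_less_eq mult.commute)
  moreover have "exp (complex_of_real a * s) = u"
    using u assms(1) by (simp add: s_def sector_def)
  ultimately show "u \<in> (\<lambda>s. exp (complex_of_real a * s)) ` strip" by blast
qed

definition koebe_strip :: "real \<Rightarrow> complex \<Rightarrow> complex" where
  "koebe_strip a s =
     (if a = 0 then s / 2 else (exp (complex_of_real a * s) - 1) / (2 * complex_of_real a))"

lemma gen_koebe_eq_koebe_strip:
  "cmod z < 1 \<Longrightarrow> gen_koebe a z = koebe_strip a (Ln (cayley z))"
  using Re_cayley_pos[of z]
  by (auto simp: gen_koebe_def koebe_strip_def powr_def mult.commute simp flip: cayley_def)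

lemma gen_koebe_image: "gen_koebe a ` ball 0 1 = koebe_strip a ` strip"
proof -
  have "gen_koebe a ` ball 0 1 = koebe_strip a ` (\<lambda>z. Ln (cayley z)) ` ball 0 1"
    by (auto simp: gen_koebe_eq_koebe_strip image_iff)
  then show ?thesis by (simp add: Ln_cayley_image)
qed

lemma inj_on_koebe_strip:
  assumes "\<bar>a\<bar> \<le> 2"
  shows "inj_on (koebe_strip a) strip"
proof (cases "a = 0")
  case True
  then show ?thesis by (auto simp: koebe_strip_def inj_on_def)
next
  case False
  have Ln_exp_scaled: "Ln (exp (complex_of_real a * s)) = complex_of_real a * s" if "s \<in> strip" for s
  proof -
    have "\<bar>a * Im s\<bar> < pi"
      using that assms False pi_gt_zero
      by (auto simp: strip_def abs_mult intro: le_less_trans[OF mult_right_mono[of _ 2]])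
    then show ?thesis by (intro Ln_exp) auto
  qed
  show ?thesis
  proof (rule inj_onI)
    fix s1 s2 assume s: "s1 \<in> strip" "s2 \<in> strip" and "koebe_strip a s1 = koebe_strip a s2"
    then have "exp (complex_of_real a * s1) = exp (complex_of_real a * s2)"
      using False by (simp add: koebe_strip_def)
    then have "complex_of_real a * s1 = complex_of_real a * s2"
      using Ln_exp_scaled s by metis
    then show "s1 = s2" using False by simp
  qed
qed

lemma inj_on_gen_koebe: "\<bar>a\<bar> \<le> 2 \<Longrightarrow> inj_on (gen_koebe a) (ball 0 1)"
proof -
  assume "\<bar>a\<bar> \<le> 2"
  then have "inj_on (koebe_strip a \<circ> (\<lambda>z. Ln (cayley z))) (ball 0 1)"
    using inj_on_Ln_cayley inj_on_koebe_strip by (intro comp_inj_on) (auto simp: Ln_cayley_image)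
  then show ?thesis
    by (rule inj_on_cong[THEN iffD1, rotated]) (simp add: gen_koebe_eq_koebe_strip)
qed

lemma gen_koebe_cnj: "cmod z < 1 \<Longrightarrow> gen_koebe a (cnj z) = cnj (gen_koebe a z)"
proof -
  assume z: "cmod z < 1"
  have "cayley z \<notin> \<real>\<^sub>\<le>\<^sub>0"
    using Re_cayley_pos[OF z] by (auto simp: complex_nonpos_Reals_iff)
  moreover have "cayley (cnj z) = cnj (cayley z)" by (simp add: cayley_def)
  ultimately have "Ln (cayley (cnj z)) = cnj (Ln (cayley z))" by (simp add: cnj_Ln)
  then show ?thesis
    using z by (simp add: gen_koebe_eq_koebe_strip koebe_strip_def exp_cnj)
qed

lemma horizontally_convex_gen_koebe_image:
  assumes "\<bar>a\<bar> \<le> 2"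
  shows "horizontally_convex (gen_koebe a ` ball 0 1)"
proof (cases "a = 0")
  case True
  let ?f = "\<lambda>u. (u - complex_of_real 0) / complex_of_real 2"
  have "gen_koebe a ` ball 0 1 = ?f ` strip"
    using True by (simp add: gen_koebe_image koebe_strip_def)
  moreover have "horizontally_convex (?f ` strip)"
    by (intro horizontally_convex_real_affine_image convex_imp_horizontally_convex convex_strip) simp
  ultimately show ?thesis by simp
next
  case False
  let ?f = "\<lambda>u. (u - complex_of_real 1) / complex_of_real (2 * a)"
  have "gen_koebe a ` ball 0 1 = ?f ` (\<lambda>s. exp (complex_of_real a * s)) ` strip"
    using False by (simp add: gen_koebe_image koebe_strip_def image_image)
  also have "\<dots> = ?f ` sector (\<bar>a\<bar> * pi / 2)"
    by (simp only: exp_image_strip[OF False assms])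
  finally have "gen_koebe a ` ball 0 1 = ?f ` sector (\<bar>a\<bar> * pi / 2)" .
  moreover have "horizontally_convex (?f ` sector (\<bar>a\<bar> * pi / 2))"
    using assms False by (intro horizontally_convex_real_affine_image horizontally_convex_sector) auto
  ultimately show ?thesis by simp
qed

lemma gen_koebe_real_at_nonreal_point:
  assumes "2 < \<bar>a\<bar>"
  obtains z where "z \<in> ball 0 1" "Im z \<noteq> 0" "Im (gen_koebe a z) = 0"
proof -
  have "a \<noteq> 0" using assms by auto
  define s where "s = \<i> * complex_of_real (pi / a)"
  have "\<bar>pi / a\<bar> < pi / 2"
    using assms by (simp add: abs_div divide_less_eq)
  then have "s \<in> strip" by (simp add: s_def strip_def)
  then obtain z where z: "z \<in> ball 0 1" and Ln_z: "Ln (cayley z) = s"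
    by (auto simp flip: Ln_cayley_image)
  have "gen_koebe a z = koebe_strip a s" using z Ln_z by (simp add: gen_koebe_eq_koebe_strip)
  also have "\<dots> = (exp (\<i> * complex_of_real pi) - 1) / (2 * complex_of_real a)"
    using \<open>a \<noteq> 0\<close> by (simp add: koebe_strip_def s_def field_simps)
  finally have "Im (gen_koebe a z) = 0" by simp
  moreover have "Im z \<noteq> 0"
  proof
    assume "Im z = 0"
    then have "Im (cayley z) = 0" by (simp add: cayley_def Im_divide)
    moreover have "0 < Re (cayley z)" using z Re_cayley_pos by simp
    ultimately have "Im (Ln (cayley z)) = 0" by (subst Im_Ln_eq_0) auto
    then show False using Ln_z \<open>a \<noteq> 0\<close> by (simp add: s_def)
  qed
  ultimately show ?thesis using z that by blast
qed

lemma inj_on_harmonic_gen_koebe: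
  fixes h g :: "complex \<Rightarrow> complex" and lambda :: real
  assumes "\<bar>a\<bar> \<le> 2" and "\<bar>lambda\<bar> \<le> 1"
    and hol: "h holomorphic_on ball 0 1" "g holomorphic_on ball 0 1"
    and hk: "\<forall>z\<in>ball 0 1. h z - g z = gen_koebe a z"
    and h'_nz: "\<forall>z\<in>ball 0 1. deriv h z \<noteq> 0"
    and dil: "\<forall>z\<in>ball 0 1. deriv g z = complex_of_real lambda * z * deriv h z"
  shows "inj_on (\<lambda>z. h z + cnj (g z)) (ball 0 1)"
proof (rule inj_on_harmonic_shear[OF open_ball hol])
  show "\<forall>z\<in>ball 0 1. cmod (deriv g z) < cmod (deriv h z)"
  proof
    fix z :: complex assume z: "z \<in> ball 0 1"
    have "cmod (deriv g z) = cmod (complex_of_real lambda * z) * cmod (deriv h z)"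
      using dil z by (simp add: norm_mult)
    also have "\<dots> < cmod (deriv h z)"
      using norm_of_real_mult_less_1[OF \<open>\<bar>lambda\<bar> \<le> 1\<close>, of z] h'_nz z
      by (simp add: mult_less_cancel_right2)
    finally show "cmod (deriv g z) < cmod (deriv h z)" .
  qed
  have "inj_on (\<lambda>z. h z - g z) (ball 0 1) = inj_on (gen_koebe a) (ball 0 1)"
    using hk by (intro inj_on_cong) simp
  then show "inj_on (\<lambda>z. h z - g z) (ball 0 1)"
    using inj_on_gen_koebe[OF \<open>\<bar>a\<bar> \<le> 2\<close>] by simp
  have "(\<lambda>z. h z - g z) ` ball 0 1 = gen_koebe a ` ball 0 1"
    using hk by (intro image_cong) simp_all
  then show "horizontally_convex ((\<lambda>z. h z - g z) ` ball 0 1)"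
    using horizontally_convex_gen_koebe_image[OF \<open>\<bar>a\<bar> \<le> 2\<close>] by simp
qed

lemma not_inj_on_harmonic_gen_koebe:
  fixes h g :: "complex \<Rightarrow> complex" and lambda :: real
  assumes "2 < \<bar>a\<bar>" and "\<bar>lambda\<bar> \<le> 1"
    and hol: "h holomorphic_on ball 0 1" "g holomorphic_on ball 0 1"
    and "h 0 \<in> \<real>"
    and hk: "\<forall>z\<in>ball 0 1. h z - g z = gen_koebe a z"
    and dil: "\<forall>z\<in>ball 0 1. deriv g z = complex_of_real lambda * z * deriv h z"
  shows "\<not> inj_on (\<lambda>z. h z + cnj (g z)) (ball 0 1)"
proof
  assume inj: "inj_on (\<lambda>z. h z + cnj (g z)) (ball 0 1)"
  obtain z where z: "z \<in> ball 0 1" "Im z \<noteq> 0" "Im (gen_koebe a z) = 0"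
    using gen_koebe_real_at_nonreal_point[OF \<open>2 < \<bar>a\<bar>\<close>] by blast
  have "\<forall>z\<in>ball 0 1. gen_koebe a (cnj z) = cnj (gen_koebe a z)"
    by (simp add: gen_koebe_cnj)
  then have "h (cnj z) = cnj (h z)" "g (cnj z) = cnj (g z)"
    using harmonic_shear_cnj_symmetric[OF hol \<open>h 0 \<in> \<real>\<close> hk _ dil \<open>\<bar>lambda\<bar> \<le> 1\<close> z(1)] by blast+
  moreover have "Im (h z - g z) = 0" using z(1,3) hk by simp
  \<comment> \<open>\<open>f (cnj z) = cnj (h z) + g z\<close> agrees with \<open>f z\<close> exactly when \<open>Im (h z - g z) = 0\<close>\<close>
  ultimately have "h (cnj z) + cnj (g (cnj z)) = h z + cnj (g z)"
    by (simp add: complex_eq_iff)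
  moreover have "cnj z \<in> ball 0 1" using z(1) by simp
  ultimately have "cnj z = z" using inj_onD[OF inj _ _ z(1)] by blast
  then show False using z(2) by (simp add: complex_eq_iff)
qed

theorem theorem2p1:
  fixes a lambda :: real and h g :: "complex \<Rightarrow> complex"
  assumes "0 \<le> lambda" and "lambda < 1"
    and "h holomorphic_on ball 0 1" and "g holomorphic_on ball 0 1"
    and "h 0 = 0" and "g 0 = 0"
    and "\<forall>z\<in>ball 0 1. h z - g z = gen_koebe a z"
    and "\<forall>z\<in>ball 0 1. deriv h z \<noteq> 0 \<and> deriv g z / deriv h z = complex_of_real lambda * z"
  shows "inj_on (\<lambda>z. h z + cnj (g z)) (ball 0 1) \<longleftrightarrow> (-2 \<le> a \<and> a \<le> 2)"
proof -
  have lambda: "\<bar>lambda\<bar> \<le> 1" using assms(1,2) by simp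
  have h'_nz: "\<forall>z\<in>ball 0 1. deriv h z \<noteq> 0"
    and dil: "\<forall>z\<in>ball 0 1. deriv g z = complex_of_real lambda * z * deriv h z"
    using assms(8) by (simp_all add: divide_eq_eq)
  have "h 0 \<in> \<real>" using assms(5) by simp
  have "\<bar>a\<bar> \<le> 2 \<Longrightarrow> inj_on (\<lambda>z. h z + cnj (g z)) (ball 0 1)"
    using inj_on_harmonic_gen_koebe[OF _ lambda assms(3,4,7) h'_nz dil] .
  moreover have "2 < \<bar>a\<bar> \<Longrightarrow> \<not> inj_on (\<lambda>z. h z + cnj (g z)) (ball 0 1)"
    using not_inj_on_harmonic_gen_koebe[OF _ lambda assms(3,4) \<open>h 0 \<in> \<real>\<close> assms(7) dil] .
  ultimately show ?thesis by linarith
qed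

end
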